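(* Let $\Sigma$ be a ranked alphabet, $B$ a strong bimonoid and $r:T_\Sigma\to B$. The following are equivalent: (i) there is a crisp-deterministic $(\Sigma,B)$-wta $\mathcal{A}$ with $r=[\![\mathcal{A}]\!]^{\mathrm{init}}$; (ii) there is a finite $(\Sigma,B)$-algebra $\mathcal{K}$ with $r=[\![\mathcal{K}]\!]$; (iii) $r$ is a $(\Sigma,B)$-recognizable step mapping in normal form; (iv) $r$ is a $(\Sigma,B)$-recognizable step mapping; (v) $\mathrm{im}(r)$ is finite and for each $b\in B$ the tree language $r^{-1}(b)=\{\xi\in T_\Sigma\mid r(\xi)=b\}$ is recognizable.
   Context: Ranked alphabet $\Sigma$ ($\Sigma^{(0)}\ne\emptyset$), trees $T_\Sigma$; strong bimonoid $(B,\oplus,\otimes,\mathbb{0},\mathbb{1})$ ($(B,\oplus,\mathbb{0})$ commutative monoid, $(B,\otimes,\mathbb{1})$ monoid, $\mathbb{0}\ne\mathbb{1}$, $\mathbb{0}$ absorbing; no distributivity). A tree language $L\subseteq T_\Sigma$ is recognizable if it is accepted by some finite-state tree automaton. A $(\Sigma,B)$-wta $\mathcal{A}=(Q,\delta,F)$: $Q$ finite nonempty, $\delta_k:Q^k\times\Sigma^{(k)}\times Q\to B$, $F:Q\to B$; $h_{\mathrm{V}(\mathcal{A})}(\sigma(\xi_1,\dots,\xi_k))_q=\bigoplus_{q_1,\dots,q_k}\big(\bigotimes_{i=1}^k h_{\mathrm{V}(\mathcal{A})}(\xi_i)_{q_i}\big)\otimes\delta_k(q_1\dots q_k,\sigma,q)$;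 $[\![\mathcal{A}]\!]^{\mathrm{init}}(\xi)=\bigoplus_q h_{\mathrm{V}(\mathcal{A})}(\xi)_q\otimes F_q$. $\mathcal{A}$ is crisp-deterministic if for all $k,\sigma\in\Sigma^{(k)},q_1,\dots,q_k$ there is a unique $q$ with $\delta_k(q_1\dots q_k,\sigma,q)=\mathbb{1}$ and all other values $\delta_k(q_1\dots q_k,\sigma,q')$ are $\mathbb{0}$. A $(\Sigma,B)$-algebra is $\mathcal{K}=(Q,\theta,F)$, $(Q,\theta)$ a $\Sigma$-algebra, $F:Q\to B$; finite if $Q$ finite; $[\![\mathcal{K}]\!]=F\circ h_{\mathcal{K}}$ with $h_{\mathcal{K}}$ the unique homomorphism from the term algebra $T_\Sigma$. For $L\subseteq T_\Sigma$, $\mathbb{1}_{(B,L)}(\xi)=\mathbb{1}$ if $\xi\in L$ and $\mathbb{0}$ otherwise. $r$ is a $(\Sigma,B)$-recognizable step mapping if $r=\bigoplus_{i=1}^n b_i\otimes\mathbb{1}_{(B,L_i)}$ (pointwise) for some $n\ge1$, recognizable $L_1,\dots,L_n\subseteq T_\Sigma$ and $b_1,\dots,b_n\in B$; it is in normal form if moreover $(L_i)_{i\in[n]}$ is a partition of $T_\Sigma$. *)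

theory Defs
  imports Main
begin

datatype 'f rtree = Node 'f "'f rtree list"

inductive_set trees :: "'f set \<Rightarrow> ('f \<Rightarrow> nat) \<Rightarrow> 'f rtree set"
  for \<Sigma> :: "'f set" and rk :: "'f \<Rightarrow> nat" where
  "f \<in> \<Sigma> \<Longrightarrow> rk f = length ts \<Longrightarrow> (\<forall>t\<in>set ts. t \<in> trees \<Sigma> rk)
     \<Longrightarrow> Node f ts \<in> trees \<Sigma> rk"

definition strong_bimonoid ::
  "('b \<Rightarrow> 'b \<Rightarrow> 'b) \<Rightarrow> ('b \<Rightarrow> 'b \<Rightarrow> 'b) \<Rightarrow> 'b \<Rightarrow> 'b \<Rightarrow> bool" where
  "strong_bimonoid pl mu z one \<longleftrightarrow>
     (\<forall>a b c. pl (pl a b) c = pl a (pl b c)) \<and> (\<forall>a b. pl a b = pl b a) \<and>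
     (\<forall>a. pl z a = a) \<and>
     (\<forall>a b c. mu (mu a b) c = mu a (mu b c)) \<and>
     (\<forall>a. mu one a = a \<and> mu a one = a) \<and>
     z \<noteq> one \<and> (\<forall>a. mu z a = z \<and> mu a z = z)"

abbreviation bsum :: "('b \<Rightarrow> 'b \<Rightarrow> 'b) \<Rightarrow> 'b \<Rightarrow> ('a \<Rightarrow> 'b) \<Rightarrow> 'a set \<Rightarrow> 'b" where
  "bsum pl z \<equiv> comm_monoid_set.F pl z"

definition bprod :: "('b \<Rightarrow> 'b \<Rightarrow> 'b) \<Rightarrow> 'b \<Rightarrow> 'b list \<Rightarrow> 'b" where
  "bprod mu one bs = foldr mu bs one"

definition strings :: "'q set \<Rightarrow> nat \<Rightarrow> 'q list set" where
  "strings Q k = {qs. set qs \<subseteq> Q \<and> length qs = k}"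

inductive reach :: "(nat list \<times> 'f \<times> nat) set \<Rightarrow> 'f rtree \<Rightarrow> nat \<Rightarrow> bool"
  for \<delta> :: "(nat list \<times> 'f \<times> nat) set" where
  "(qs, f, q) \<in> \<delta> \<Longrightarrow> length qs = length ts \<Longrightarrow>
     (\<forall>i<length ts. reach \<delta> (ts ! i) (qs ! i)) \<Longrightarrow> reach \<delta> (Node f ts) q"

definition recognizable :: "'f set \<Rightarrow> ('f \<Rightarrow> nat) \<Rightarrow> 'f rtree set \<Rightarrow> bool" where
  "recognizable \<Sigma> rk L \<longleftrightarrow> L \<subseteq> trees \<Sigma> rk \<and>
     (\<exists>(Q::nat set) \<delta> F. finite Q \<and> F \<subseteq> Q \<and>
        (\<forall>(qs, f, q) \<in> \<delta>. set qs \<subseteq> Q \<and> q \<in> Q \<and> f \<in> \<Sigma> \<and> rk f = length qs) \<and>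
        L = {t \<in> trees \<Sigma> rk. \<exists>q\<in>F. reach \<delta> t q})"

text \<open>A (Sigma,B)-wta (Q, delta, F): Q finite nonempty set of states (naturals),
delta qs f q = delta_k(q1...qk, f, q), F final weights.
wta_h computes the vector h_V(A)(xi) (as a function on states).\<close>

fun wta_h :: "('b \<Rightarrow> 'b \<Rightarrow> 'b) \<Rightarrow> ('b \<Rightarrow> 'b \<Rightarrow> 'b) \<Rightarrow> 'b \<Rightarrow> 'b \<Rightarrow> nat set \<Rightarrow>
    (nat list \<Rightarrow> 'f \<Rightarrow> nat \<Rightarrow> 'b) \<Rightarrow> 'f rtree \<Rightarrow> nat \<Rightarrow> 'b" where
  "wta_h pl mu z one Q \<delta> (Node f ts) =
     (\<lambda>q. bsum pl z
        (\<lambda>qs. mu (bprod mu one (map2 (\<lambda>v p. v p) (map (wta_h pl mu z one Q \<delta>) ts) qs))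
                 (\<delta> qs f q))
        (strings Q (length ts)))"

definition wta_sem :: "('b \<Rightarrow> 'b \<Rightarrow> 'b) \<Rightarrow> ('b \<Rightarrow> 'b \<Rightarrow> 'b) \<Rightarrow> 'b \<Rightarrow> 'b \<Rightarrow> nat set \<Rightarrow>
    (nat list \<Rightarrow> 'f \<Rightarrow> nat \<Rightarrow> 'b) \<Rightarrow> (nat \<Rightarrow> 'b) \<Rightarrow> 'f rtree \<Rightarrow> 'b" where
  "wta_sem pl mu z one Q \<delta> F t = bsum pl z (\<lambda>q. mu (wta_h pl mu z one Q \<delta> t q) (F q)) Q"

definition is_wta :: "'f set \<Rightarrow> ('f \<Rightarrow> nat) \<Rightarrow> nat set \<Rightarrow> bool" where
  "is_wta \<Sigma> rk Q \<longleftrightarrow> finite Q \<and> Q \<noteq> {}"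

definition crisp_deterministic :: "'f set \<Rightarrow> ('f \<Rightarrow> nat) \<Rightarrow> 'b \<Rightarrow> 'b \<Rightarrow> nat set \<Rightarrow>
    (nat list \<Rightarrow> 'f \<Rightarrow> nat \<Rightarrow> 'b) \<Rightarrow> bool" where
  "crisp_deterministic \<Sigma> rk z one Q \<delta> \<longleftrightarrow>
     (\<forall>f\<in>\<Sigma>. \<forall>qs\<in>strings Q (rk f).
        \<exists>q\<in>Q. \<delta> qs f q = one \<and> (\<forall>q'\<in>Q. q' \<noteq> q \<longrightarrow> \<delta> qs f q' = z))"

definition is_finite_algebra :: "'f set \<Rightarrow> ('f \<Rightarrow> nat) \<Rightarrow> nat set \<Rightarrow> ('f \<Rightarrow> nat list \<Rightarrow> nat) \<Rightarrow> bool" where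
  "is_finite_algebra \<Sigma> rk Q \<theta> \<longleftrightarrow> finite Q \<and>
     (\<forall>f\<in>\<Sigma>. \<forall>qs\<in>strings Q (rk f). \<theta> f qs \<in> Q)"

fun alg_h :: "('f \<Rightarrow> nat list \<Rightarrow> nat) \<Rightarrow> 'f rtree \<Rightarrow> nat" where
  "alg_h \<theta> (Node f ts) = \<theta> f (map (alg_h \<theta>) ts)"

definition indic :: "'b \<Rightarrow> 'b \<Rightarrow> 'a set \<Rightarrow> 'a \<Rightarrow> 'b" where
  "indic z one L x = (if x \<in> L then one else z)"

definition step_mapping :: "'f set \<Rightarrow> ('f \<Rightarrow> nat) \<Rightarrow> ('b \<Rightarrow> 'b \<Rightarrow> 'b) \<Rightarrow> ('b \<Rightarrow> 'b \<Rightarrow> 'b) \<Rightarrow>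
    'b \<Rightarrow> 'b \<Rightarrow> ('f rtree \<Rightarrow> 'b) \<Rightarrow> bool" where
  "step_mapping \<Sigma> rk pl mu z one r \<longleftrightarrow>
     (\<exists>n::nat. \<exists>L::nat \<Rightarrow> 'f rtree set. \<exists>b::nat \<Rightarrow> 'b. n \<ge> 1 \<and>
        (\<forall>i<n. recognizable \<Sigma> rk (L i)) \<and>
        (\<forall>t\<in>trees \<Sigma> rk. r t = bsum pl z (\<lambda>i. mu (b i) (indic z one (L i) t)) {..<n}))"

definition step_mapping_nf :: "'f set \<Rightarrow> ('f \<Rightarrow> nat) \<Rightarrow> ('b \<Rightarrow> 'b \<Rightarrow> 'b) \<Rightarrow> ('b \<Rightarrow> 'b \<Rightarrow> 'b) \<Rightarrow>
    'b \<Rightarrow> 'b \<Rightarrow> ('f rtree \<Rightarrow> 'b) \<Rightarrow> bool" where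
  "step_mapping_nf \<Sigma> rk pl mu z one r \<longleftrightarrow>
     (\<exists>n::nat. \<exists>L::nat \<Rightarrow> 'f rtree set. \<exists>b::nat \<Rightarrow> 'b. n \<ge> 1 \<and>
        (\<forall>i<n. recognizable \<Sigma> rk (L i)) \<and>
        (\<forall>i<n. \<forall>j<n. i \<noteq> j \<longrightarrow> L i \<inter> L j = {}) \<and>
        (\<Union>i<n. L i) = trees \<Sigma> rk \<and>
        (\<forall>t\<in>trees \<Sigma> rk. r t = bsum pl z (\<lambda>i. mu (b i) (indic z one (L i) t)) {..<n}))"

end

theory Submission
  imports Defs "HOL-Library.Nat_Bijection"
begin

(* A crisp-deterministic wta is a finite algebra in disguise: its state vector h(t) is the
   indicator of the state the algebra reaches on t, and sums and products of 0 and 1 never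
   need distributivity.  A map F o h given by a finite algebra takes finitely many values and
   the algebra recognizes each fibre, so the fibres partition the trees into the languages of
   a step mapping in normal form.  Conversely, for a step mapping built from L_1, ..., L_n,
   the product of algebras recognizing the L_i determines which L_i contain t, and hence r(t).
   Throughout, recognizable languages are replaced by languages recognized by finite algebras,
   via the subset construction. *)

lemma strong_bimonoid_comm_monoid_set:
  assumes "strong_bimonoid pl mu z one"
  shows "comm_monoid_set pl z"
proof -
  have assoc: "\<And>a b c. pl (pl a b) c = pl a (pl b c)" and comm: "\<And>a b. pl a b = pl b a"
    and unit: "\<And>a. pl z a = a"
    using assms unfolding strong_bimonoid_def by auto
  show ?thesis
    by unfold_locales (metis assoc comm unit)+
qed

lemma strong_bimonoidD:
  assumes "strong_bimonoid pl mu z one"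
  shows "mu one a = a" "mu a one = a" "mu z a = z" "mu a z = z" "z \<noteq> one"
  using assms unfolding strong_bimonoid_def by auto

lemma bprod_map2_crisp:
  assumes sb: "strong_bimonoid pl mu z one"
    and "list_all2 (\<lambda>t p. H t p = (if p = g t then one else z)) ts ps"
  shows "bprod mu one (map2 (\<lambda>v p. v p) (map H ts) ps) = (if ps = map g ts then one else z)"
  using assms(2)
  by (induction rule: list_all2_induct) (auto simp: bprod_def strong_bimonoidD[OF sb])

lemma bsum_step_partition:
  assumes sb: "strong_bimonoid pl mu z one" and "finite I" and "j \<in> I" and "t \<in> L j"
    and "\<And>i. i \<in> I \<Longrightarrow> i \<noteq> j \<Longrightarrow> t \<notin> L i"
  shows "bsum pl z (\<lambda>i. mu (b i) (indic z one (L i) t)) I = b j"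
proof -
  interpret S: comm_monoid_set pl z
    using sb by (rule strong_bimonoid_comm_monoid_set)
  have "mu (b i) (indic z one (L i) t) = (if i = j then b j else z)" if "i \<in> I" for i
    using assms(4) assms(5)[OF that] by (auto simp: indic_def strong_bimonoidD[OF sb])
  then have "bsum pl z (\<lambda>i. mu (b i) (indic z one (L i) t)) I = bsum pl z (\<lambda>i. if i = j then b j else z) I"
    by (rule S.cong[OF refl])
  also have "\<dots> = b j"
    using assms(2,3) by (simp add: S.delta)
  finally show ?thesis .
qed

lemma alg_h_in_carrier:
  assumes "is_finite_algebra \<Sigma> rk Q \<theta>" and "t \<in> trees \<Sigma> rk"
  shows "alg_h \<theta> t \<in> Q"
  using assms(2)
proof (induction t rule: trees.induct)
  case (1 f ts)
  then have "map (alg_h \<theta>) ts \<in> strings Q (rk f)"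
    by (auto simp: strings_def)
  with 1 assms(1) show ?case
    by (auto simp: is_finite_algebra_def)
qed

lemma finite_strings: "finite Q \<Longrightarrow> finite (strings Q k)"
  unfolding strings_def by (rule finite_lists_length_eq)

definition alg_recognizable :: "'f set \<Rightarrow> ('f \<Rightarrow> nat) \<Rightarrow> 'f rtree set \<Rightarrow> bool" where
  "alg_recognizable \<Sigma> rk L \<longleftrightarrow>
     (\<exists>Q \<theta> F. is_finite_algebra \<Sigma> rk Q \<theta> \<and> L = {t \<in> trees \<Sigma> rk. alg_h \<theta> t \<in> F})"

lemma alg_recognizable_imp_recognizable:
  assumes "alg_recognizable \<Sigma> rk L"
  shows "recognizable \<Sigma> rk L"
proof -
  obtain Q \<theta> F where alg: "is_finite_algebra \<Sigma> rk Q \<theta>"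
    and L: "L = {t \<in> trees \<Sigma> rk. alg_h \<theta> t \<in> F}"
    using assms unfolding alg_recognizable_def by blast
  define \<delta> where "\<delta> = {(qs, f, \<theta> f qs) | f qs. f \<in> \<Sigma> \<and> qs \<in> strings Q (rk f)}"
  have reach_alg_h: "reach \<delta> t (alg_h \<theta> t)" if "t \<in> trees \<Sigma> rk" for t
    using that
  proof (induction t rule: trees.induct)
    case (1 f ts)
    then have "map (alg_h \<theta>) ts \<in> strings Q (rk f)"
      using alg_h_in_carrier[OF alg] by (auto simp: strings_def)
    with 1 have "(map (alg_h \<theta>) ts, f, alg_h \<theta> (Node f ts)) \<in> \<delta>"
      by (auto simp: \<delta>_def)
    with 1 show ?case
      by (auto intro: reach.intros)
  qed
  have reach_unique: "q = alg_h \<theta> t" if "reach \<delta> t q" for t q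
    using that
  proof (induction rule: reach.induct)
    case (1 qs f q ts)
    then have "qs = map (alg_h \<theta>) ts"
      by (auto intro: nth_equalityI)
    with 1 show ?case
      by (auto simp: \<delta>_def)
  qed
  have "\<forall>(qs, f, q) \<in> \<delta>. set qs \<subseteq> Q \<and> q \<in> Q \<and> f \<in> \<Sigma> \<and> rk f = length qs"
    using alg by (auto simp: \<delta>_def strings_def is_finite_algebra_def)
  moreover have "L = {t \<in> trees \<Sigma> rk. \<exists>q\<in>F \<inter> Q. reach \<delta> t q}"
    using L reach_alg_h reach_unique alg_h_in_carrier[OF alg] by blast
  ultimately show ?thesis
    using alg L unfolding recognizable_def is_finite_algebra_def
    by (intro conjI exI[of _ Q] exI[of _ \<delta>] exI[of _ "F \<inter> Q"]) auto
qed

(* Algebras have natural numbers as states, so sets and tuples of states are coded by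
   set_encode and list_encode. *)
definition subset_alg :: "nat set \<Rightarrow> (nat list \<times> 'f \<times> nat) set \<Rightarrow> 'f \<Rightarrow> nat list \<Rightarrow> nat" where
  "subset_alg Q \<delta> f Ss =
     set_encode {q \<in> Q. \<exists>qs. (qs, f, q) \<in> \<delta> \<and> list_all2 (\<lambda>q S. q \<in> set_decode S) qs Ss}"

lemma set_decode_alg_h_subset_alg:
  assumes "finite Q" and "\<forall>(qs, f, q) \<in> \<delta>. q \<in> Q"
  shows "set_decode (alg_h (subset_alg Q \<delta>) t) = {q. reach \<delta> t q}"
proof (induction t)
  case (Node f ts)
  have "list_all2 (\<lambda>q S. q \<in> set_decode S) qs (map (alg_h (subset_alg Q \<delta>)) ts)
      \<longleftrightarrow> list_all2 (\<lambda>q t. reach \<delta> t q) qs ts" for qs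
    using Node by (auto simp: list.rel_map list_all2_conv_all_nth)
  then have "set_decode (alg_h (subset_alg Q \<delta>) (Node f ts)) =
      {q \<in> Q. \<exists>qs. (qs, f, q) \<in> \<delta> \<and> list_all2 (\<lambda>q t. reach \<delta> t q) qs ts}"
    using assms(1) by (simp add: subset_alg_def)
  also have "\<dots> = {q. reach \<delta> (Node f ts) q}"
    using assms(2) by (auto simp: reach.simps[of _ "Node f ts"] list_all2_conv_all_nth)
  finally show ?case .
qed

lemma recognizable_imp_alg_recognizable:
  assumes "recognizable \<Sigma> rk L"
  shows "alg_recognizable \<Sigma> rk L"
proof -
  obtain Q :: "nat set" and \<delta> F where Q: "finite Q"
    and \<delta>: "\<forall>(qs, f, q) \<in> \<delta>. set qs \<subseteq> Q \<and> q \<in> Q \<and> f \<in> \<Sigma> \<and> rk f = length qs"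
    and L: "L = {t \<in> trees \<Sigma> rk. \<exists>q\<in>F. reach \<delta> t q}"
    using assms unfolding recognizable_def by blast
  have "is_finite_algebra \<Sigma> rk (set_encode ` Pow Q) (subset_alg Q \<delta>)"
    using Q unfolding is_finite_algebra_def subset_alg_def by auto
  moreover have "L = {t \<in> trees \<Sigma> rk. alg_h (subset_alg Q \<delta>) t \<in> {S. set_decode S \<inter> F \<noteq> {}}}"
    using L set_decode_alg_h_subset_alg[OF Q] \<delta> by fastforce
  ultimately show ?thesis
    unfolding alg_recognizable_def by blast
qed

definition prod_alg :: "nat \<Rightarrow> (nat \<Rightarrow> 'f \<Rightarrow> nat list \<Rightarrow> nat) \<Rightarrow> 'f \<Rightarrow> nat list \<Rightarrow> nat" where
  "prod_alg n \<Theta> f qs = list_encode (map (\<lambda>i. \<Theta> i f (map (\<lambda>q. list_decode q ! i) qs)) [0..<n])"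

lemma alg_h_prod_alg:
  "alg_h (prod_alg n \<Theta>) t = list_encode (map (\<lambda>i. alg_h (\<Theta> i) t) [0..<n])"
proof (induction t)
  case (Node f ts)
  have components: "map (\<lambda>q. list_decode q ! i) (map (alg_h (prod_alg n \<Theta>)) ts) = map (alg_h (\<Theta> i)) ts"
    if "i < n" for i
    using Node that by simp
  have "alg_h (prod_alg n \<Theta>) (Node f ts) =
      list_encode (map (\<lambda>i. \<Theta> i f (map (\<lambda>q. list_decode q ! i) (map (alg_h (prod_alg n \<Theta>)) ts))) [0..<n])"
    by (simp only: alg_h.simps prod_alg_def)
  also have "\<dots> = list_encode (map (\<lambda>i. alg_h (\<Theta> i) (Node f ts)) [0..<n])"
    by (intro arg_cong[where f = list_encode] map_cong refl) (metis alg_h.simps atLeastLessThan_iff components set_upt)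
  finally show ?case .
qed

lemma is_finite_algebra_prod_alg:
  assumes "\<And>i. i < n \<Longrightarrow> is_finite_algebra \<Sigma> rk (Q i) (\<Theta> i)"
  shows "is_finite_algebra \<Sigma> rk (list_encode ` {v. length v = n \<and> (\<forall>i<n. v ! i \<in> Q i)})
           (prod_alg n \<Theta>)"
proof -
  have "finite (\<Union>i<n. Q i)"
    using assms by (auto simp: is_finite_algebra_def)
  moreover have "{v. length v = n \<and> (\<forall>i<n. v ! i \<in> Q i)} \<subseteq> {v. set v \<subseteq> (\<Union>i<n. Q i) \<and> length v = n}"
    by (force simp: in_set_conv_nth)
  ultimately have "finite {v. length v = n \<and> (\<forall>i<n. v ! i \<in> Q i)}"
    using finite_lists_length_eq finite_subset by blast
  moreover have "\<Theta> i f (map (\<lambda>q. list_decode q ! i) qs) \<in> Q i"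
    if "f \<in> \<Sigma>" and "qs \<in> strings (list_encode ` {v. length v = n \<and> (\<forall>i<n. v ! i \<in> Q i)}) (rk f)"
      and "i < n" for f qs i
  proof -
    from that(2,3) have "map (\<lambda>q. list_decode q ! i) qs \<in> strings (Q i) (rk f)"
      by (auto simp: strings_def)
    with assms[OF that(3)] that(1) show ?thesis
      by (auto simp: is_finite_algebra_def)
  qed
  ultimately show ?thesis
    unfolding is_finite_algebra_def by (auto simp: prod_alg_def)
qed

lemma recognizable_family_common_algebra:
  fixes n :: nat
  assumes "\<forall>i<n. recognizable \<Sigma> rk (L i)"
  shows "\<exists>Q \<theta> F. is_finite_algebra \<Sigma> rk Q \<theta> \<and> (\<forall>i<n. L i = {t \<in> trees \<Sigma> rk. alg_h \<theta> t \<in> F i})"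
proof -
  have "\<forall>i<n. \<exists>Q \<theta> F. is_finite_algebra \<Sigma> rk Q \<theta> \<and> L i = {t \<in> trees \<Sigma> rk. alg_h \<theta> t \<in> F}"
    using assms recognizable_imp_alg_recognizable unfolding alg_recognizable_def by blast
  then obtain Q \<Theta> F where "\<forall>i<n. is_finite_algebra \<Sigma> rk (Q i) (\<Theta> i) \<and>
      L i = {t \<in> trees \<Sigma> rk. alg_h (\<Theta> i) t \<in> F i}"
    by (auto simp only: choice_iff')
  then have alg: "\<And>i. i < n \<Longrightarrow> is_finite_algebra \<Sigma> rk (Q i) (\<Theta> i)"
    and L: "\<And>i. i < n \<Longrightarrow> L i = {t \<in> trees \<Sigma> rk. alg_h (\<Theta> i) t \<in> F i}"
    by auto
  have "L i = {t \<in> trees \<Sigma> rk. alg_h (prod_alg n \<Theta>) t \<in> {x. list_decode x ! i \<in> F i}}" if "i < n" for i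
    using L[OF that] that by (simp add: alg_h_prod_alg)
  with is_finite_algebra_prod_alg[OF alg] show ?thesis
    by (intro exI[of _ "list_encode ` {v. length v = n \<and> (\<forall>i<n. v ! i \<in> Q i)}"]
        exI[of _ "prod_alg n \<Theta>"] exI[of _ "\<lambda>i. {x. list_decode x ! i \<in> F i}"]) simp
qed

lemma wta_h_crisp:
  assumes sb: "strong_bimonoid pl mu z one" and alg: "is_finite_algebra \<Sigma> rk Q \<theta>"
    and \<delta>: "\<And>f qs q. f \<in> \<Sigma> \<Longrightarrow> qs \<in> strings Q (rk f) \<Longrightarrow> q \<in> Q \<Longrightarrow>
            \<delta> qs f q = (if q = \<theta> f qs then one else z)"
    and "t \<in> trees \<Sigma> rk"
  shows "\<forall>q\<in>Q. wta_h pl mu z one Q \<delta> t q = (if q = alg_h \<theta> t then one else z)"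
  using assms(4)
proof (induction t rule: trees.induct)
  case (1 f ts)
  interpret S: comm_monoid_set pl z
    using sb by (rule strong_bimonoid_comm_monoid_set)
  let ?h = "wta_h pl mu z one Q \<delta>"
  let ?m = "map (alg_h \<theta>) ts"
  have finite_Q: "finite Q"
    using alg by (simp add: is_finite_algebra_def)
  have m: "?m \<in> strings Q (length ts)"
    using 1 alg_h_in_carrier[OF alg] by (auto simp: strings_def)
  have summand: "mu (bprod mu one (map2 (\<lambda>v p. v p) (map ?h ts) qs)) (\<delta> qs f q)
      = (if qs = ?m then \<delta> ?m f q else z)" if "qs \<in> strings Q (length ts)" for qs q
  proof -
    have "list_all2 (\<lambda>t p. ?h t p = (if p = alg_h \<theta> t then one else z)) ts qs"
      unfolding list_all2_conv_all_nth
    proof (intro conjI allI impI)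
      show "length ts = length qs"
        using that by (simp add: strings_def)
      fix i assume "i < length ts"
      then have "ts ! i \<in> set ts" and "qs ! i \<in> Q"
        using that by (auto simp: strings_def)
      with 1 show "?h (ts ! i) (qs ! i) = (if qs ! i = alg_h \<theta> (ts ! i) then one else z)"
        by blast
    qed
    then show ?thesis
      by (simp add: bprod_map2_crisp[OF sb] strong_bimonoidD[OF sb])
  qed
  show ?case
  proof
    fix q assume "q \<in> Q"
    have "?h (Node f ts) q = bsum pl z (\<lambda>qs. if qs = ?m then \<delta> ?m f q else z) (strings Q (length ts))"
      by (simp add: summand cong: S.cong)
    also have "\<dots> = \<delta> ?m f q"
      using m finite_strings[OF finite_Q] by (simp add: S.delta)
    also have "\<dots> = (if q = alg_h \<theta> (Node f ts) then one else z)"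
      using \<delta> 1 m \<open>q \<in> Q\<close> by simp
    finally show "?h (Node f ts) q = (if q = alg_h \<theta> (Node f ts) then one else z)" .
  qed
qed

lemma wta_sem_crisp:
  assumes sb: "strong_bimonoid pl mu z one" and alg: "is_finite_algebra \<Sigma> rk Q \<theta>"
    and \<delta>: "\<And>f qs q. f \<in> \<Sigma> \<Longrightarrow> qs \<in> strings Q (rk f) \<Longrightarrow> q \<in> Q \<Longrightarrow>
            \<delta> qs f q = (if q = \<theta> f qs then one else z)"
    and t: "t \<in> trees \<Sigma> rk"
  shows "wta_sem pl mu z one Q \<delta> F t = F (alg_h \<theta> t)"
proof -
  interpret S: comm_monoid_set pl z
    using sb by (rule strong_bimonoid_comm_monoid_set)
  have "wta_sem pl mu z one Q \<delta> F t = bsum pl z (\<lambda>q. if q = alg_h \<theta> t then F (alg_h \<theta> t) else z) Q"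
    unfolding wta_sem_def
    by (rule S.cong[OF refl]) (simp add: wta_h_crisp[OF sb alg \<delta> t] strong_bimonoidD[OF sb])
  also have "\<dots> = F (alg_h \<theta> t)"
    using alg alg_h_in_carrier[OF alg t] by (simp add: S.delta is_finite_algebra_def)
  finally show ?thesis .
qed

lemma crisp_deterministic_transition_function:
  assumes "crisp_deterministic \<Sigma> rk z one Q \<delta>"
  obtains \<theta> where "\<And>f qs. f \<in> \<Sigma> \<Longrightarrow> qs \<in> strings Q (rk f) \<Longrightarrow> \<theta> f qs \<in> Q"
    and "\<And>f qs q. f \<in> \<Sigma> \<Longrightarrow> qs \<in> strings Q (rk f) \<Longrightarrow> q \<in> Q \<Longrightarrow>
           \<delta> qs f q = (if q = \<theta> f qs then one else z)"
proof -
  have "\<forall>f\<in>\<Sigma>. \<forall>qs\<in>strings Q (rk f). \<exists>q\<in>Q. \<forall>q'\<in>Q. \<delta> qs f q' = (if q' = q then one else z)"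
    using assms unfolding crisp_deterministic_def by metis
  then have "\<exists>\<theta>. \<forall>f\<in>\<Sigma>. \<forall>qs\<in>strings Q (rk f).
      \<theta> f qs \<in> Q \<and> (\<forall>q'\<in>Q. \<delta> qs f q' = (if q' = \<theta> f qs then one else z))"
    by metis
  with that show ?thesis
    by blast
qed

lemma crisp_wta_iff_finite_algebra:
  assumes sb: "strong_bimonoid pl mu z one" and "trees \<Sigma> rk \<noteq> {}"
  shows "(\<exists>Q \<delta> F. is_wta \<Sigma> rk Q \<and> crisp_deterministic \<Sigma> rk z one Q \<delta> \<and>
            (\<forall>t\<in>trees \<Sigma> rk. r t = wta_sem pl mu z one Q \<delta> F t))
     \<longleftrightarrow> (\<exists>Q \<theta> (F :: nat \<Rightarrow> 'b). is_finite_algebra \<Sigma> rk Q \<theta> \<and>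
            (\<forall>t\<in>trees \<Sigma> rk. r t = F (alg_h \<theta> t)))"
proof
  assume "\<exists>Q \<delta> F. is_wta \<Sigma> rk Q \<and> crisp_deterministic \<Sigma> rk z one Q \<delta> \<and>
            (\<forall>t\<in>trees \<Sigma> rk. r t = wta_sem pl mu z one Q \<delta> F t)"
  then obtain Q \<delta> F where wta: "is_wta \<Sigma> rk Q" and crisp: "crisp_deterministic \<Sigma> rk z one Q \<delta>"
    and r: "\<forall>t\<in>trees \<Sigma> rk. r t = wta_sem pl mu z one Q \<delta> F t"
    by blast
  obtain \<theta> where closed: "\<And>f qs. f \<in> \<Sigma> \<Longrightarrow> qs \<in> strings Q (rk f) \<Longrightarrow> \<theta> f qs \<in> Q"
    and \<delta>: "\<And>f qs q. f \<in> \<Sigma> \<Longrightarrow> qs \<in> strings Q (rk f) \<Longrightarrow> q \<in> Q \<Longrightarrow>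
           \<delta> qs f q = (if q = \<theta> f qs then one else z)"
    using crisp_deterministic_transition_function[OF crisp] by blast
  have alg: "is_finite_algebra \<Sigma> rk Q \<theta>"
    using wta closed by (simp add: is_wta_def is_finite_algebra_def)
  have "wta_sem pl mu z one Q \<delta> F t = F (alg_h \<theta> t)" if "t \<in> trees \<Sigma> rk" for t
    by (rule wta_sem_crisp[OF sb alg _ that]) (simp add: \<delta>)
  with alg r show "\<exists>Q \<theta> (F :: nat \<Rightarrow> 'b). is_finite_algebra \<Sigma> rk Q \<theta> \<and> (\<forall>t\<in>trees \<Sigma> rk. r t = F (alg_h \<theta> t))"
    by auto
next
  assume "\<exists>Q \<theta> (F :: nat \<Rightarrow> 'b). is_finite_algebra \<Sigma> rk Q \<theta> \<and> (\<forall>t\<in>trees \<Sigma> rk. r t = F (alg_h \<theta> t))"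
  then obtain Q \<theta> and F :: "nat \<Rightarrow> 'b" where alg: "is_finite_algebra \<Sigma> rk Q \<theta>"
    and r: "\<forall>t\<in>trees \<Sigma> rk. r t = F (alg_h \<theta> t)"
    by blast
  define \<delta> where "\<delta> qs f q = (if q = \<theta> f qs then one else z)" for qs f q
  have "Q \<noteq> {}"
    using assms(2) alg_h_in_carrier[OF alg] by blast
  then have "is_wta \<Sigma> rk Q"
    using alg by (simp add: is_wta_def is_finite_algebra_def)
  moreover have "crisp_deterministic \<Sigma> rk z one Q \<delta>"
    using alg by (auto simp: crisp_deterministic_def is_finite_algebra_def \<delta>_def)
  moreover have "\<forall>t\<in>trees \<Sigma> rk. r t = wta_sem pl mu z one Q \<delta> F t"
    using r wta_sem_crisp[OF sb alg, of \<delta>] by (simp add: \<delta>_def)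
  ultimately show "\<exists>Q \<delta> F. is_wta \<Sigma> rk Q \<and> crisp_deterministic \<Sigma> rk z one Q \<delta> \<and>
            (\<forall>t\<in>trees \<Sigma> rk. r t = wta_sem pl mu z one Q \<delta> F t)"
    by blast
qed

lemma finite_algebra_imp_recognizable_fibres:
  assumes alg: "is_finite_algebra \<Sigma> rk Q \<theta>" and r: "\<forall>t\<in>trees \<Sigma> rk. r t = F (alg_h \<theta> t)"
  shows "finite (r ` trees \<Sigma> rk) \<and> (\<forall>b. recognizable \<Sigma> rk {t \<in> trees \<Sigma> rk. r t = b})"
proof (intro conjI allI)
  have "r ` trees \<Sigma> rk \<subseteq> F ` Q"
    using r alg_h_in_carrier[OF alg] by auto
  moreover have "finite (F ` Q)"
    using alg by (simp add: is_finite_algebra_def)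
  ultimately show "finite (r ` trees \<Sigma> rk)"
    by (rule finite_subset)
next
  fix b
  have "{t \<in> trees \<Sigma> rk. r t = b} = {t \<in> trees \<Sigma> rk. alg_h \<theta> t \<in> {q. F q = b}}"
    using r by auto
  with alg have "alg_recognizable \<Sigma> rk {t \<in> trees \<Sigma> rk. r t = b}"
    unfolding alg_recognizable_def by (intro exI[of _ Q] exI[of _ \<theta>] exI[of _ "{q. F q = b}"]) simp
  then show "recognizable \<Sigma> rk {t \<in> trees \<Sigma> rk. r t = b}"
    by (rule alg_recognizable_imp_recognizable)
qed

lemma recognizable_fibres_imp_step_mapping_nf:
  assumes sb: "strong_bimonoid pl mu z one" and "trees \<Sigma> rk \<noteq> {}"
    and fin: "finite (r ` trees \<Sigma> rk)" and rec: "\<forall>b. recognizable \<Sigma> rk {t \<in> trees \<Sigma> rk. r t = b}"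
  shows "step_mapping_nf \<Sigma> rk pl mu z one r"
proof -
  define n where "n = card (r ` trees \<Sigma> rk)"
  obtain e where e: "bij_betw e {..<n} (r ` trees \<Sigma> rk)"
    using ex_bij_betw_nat_finite[OF fin] unfolding n_def atLeast0LessThan by blast
  have inj: "inj_on e {..<n}"
    using e by (rule bij_betw_imp_inj_on)
  define L where "L i = {t \<in> trees \<Sigma> rk. r t = e i}" for i
  have "n \<ge> 1"
    using assms(2) fin by (simp add: n_def Suc_le_eq card_gt_0_iff)
  moreover have "\<forall>i<n. recognizable \<Sigma> rk (L i)"
    using rec by (simp add: L_def)
  moreover have "\<forall>i<n. \<forall>j<n. i \<noteq> j \<longrightarrow> L i \<inter> L j = {}"
    using inj by (auto simp: L_def inj_on_def)
  moreover have index: "\<exists>j<n. t \<in> L j" if "t \<in> trees \<Sigma> rk" for t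
  proof -
    have "r t \<in> e ` {..<n}"
      using bij_betw_imp_surj_on[OF e] that by blast
    with that show ?thesis
      by (auto simp: L_def)
  qed
  then have "(\<Union>i<n. L i) = trees \<Sigma> rk"
    by (auto simp: L_def)
  moreover have "r t = bsum pl z (\<lambda>i. mu (e i) (indic z one (L i) t)) {..<n}"
    if t: "t \<in> trees \<Sigma> rk" for t
  proof -
    obtain j where "j < n" and "t \<in> L j"
      using index[OF t] by blast
    then have "bsum pl z (\<lambda>i. mu (e i) (indic z one (L i) t)) {..<n} = e j"
      using inj by (intro bsum_step_partition[OF sb]) (auto simp: L_def inj_on_def)
    with \<open>t \<in> L j\<close> show ?thesis
      by (simp add: L_def)
  qed
  ultimately show ?thesis
    unfolding step_mapping_nf_def by (intro exI[of _ n] exI[of _ L] exI[of _ e]) simp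
qed

lemma step_mapping_nf_imp_step_mapping:
  "step_mapping_nf \<Sigma> rk pl mu z one r \<Longrightarrow> step_mapping \<Sigma> rk pl mu z one r"
  unfolding step_mapping_nf_def step_mapping_def
  by (elim exE conjE, intro exI conjI) assumption+

lemma step_mapping_imp_finite_algebra:
  assumes sb: "strong_bimonoid pl mu z one" and "step_mapping \<Sigma> rk pl mu z one r"
  shows "\<exists>Q \<theta> (F :: nat \<Rightarrow> 'b). is_finite_algebra \<Sigma> rk Q \<theta> \<and> (\<forall>t\<in>trees \<Sigma> rk. r t = F (alg_h \<theta> t))"
proof -
  interpret S: comm_monoid_set pl z
    using sb by (rule strong_bimonoid_comm_monoid_set)
  obtain n :: nat and L b where rec: "\<forall>i<n. recognizable \<Sigma> rk (L i)"
    and r: "\<forall>t\<in>trees \<Sigma> rk. r t = bsum pl z (\<lambda>i. mu (b i) (indic z one (L i) t)) {..<n}"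
    using assms(2) unfolding step_mapping_def by blast
  obtain Q \<theta> FF where alg: "is_finite_algebra \<Sigma> rk Q \<theta>"
    and L: "\<forall>i<n. L i = {t \<in> trees \<Sigma> rk. alg_h \<theta> t \<in> FF i}"
    using recognizable_family_common_algebra[OF rec] by auto
  define F where "F q = bsum pl z (\<lambda>i. mu (b i) (indic z one (FF i) q)) {..<n}" for q
  have "r t = F (alg_h \<theta> t)" if "t \<in> trees \<Sigma> rk" for t
    unfolding F_def r[rule_format, OF that]
    by (rule S.cong[OF refl]) (use L that in \<open>simp add: indic_def\<close>)
  with alg show ?thesis
    by (intro exI[of _ Q] exI[of _ \<theta>] exI[of _ F]) simp
qed

theorem lemma5p3:
  fixes \<Sigma> :: "'f set" and rk :: "'f \<Rightarrow> nat"
    and pl mu :: "'b \<Rightarrow> 'b \<Rightarrow> 'b" and z one :: 'b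
    and r :: "'f rtree \<Rightarrow> 'b"
  assumes "finite \<Sigma>" and "\<exists>f\<in>\<Sigma>. rk f = 0"
    and "strong_bimonoid pl mu z one"
  defines "i \<equiv> (\<exists>Q \<delta> F. is_wta \<Sigma> rk Q \<and> crisp_deterministic \<Sigma> rk z one Q \<delta> \<and>
                 (\<forall>t\<in>trees \<Sigma> rk. r t = wta_sem pl mu z one Q \<delta> F t))"
    and "ii \<equiv> (\<exists>Q \<theta> (F :: nat \<Rightarrow> 'b). is_finite_algebra \<Sigma> rk Q \<theta> \<and>
                 (\<forall>t\<in>trees \<Sigma> rk. r t = F (alg_h \<theta> t)))"
    and "iii \<equiv> step_mapping_nf \<Sigma> rk pl mu z one r"
    and "iv \<equiv> step_mapping \<Sigma> rk pl mu z one r"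
    and "v \<equiv> finite (r ` trees \<Sigma> rk) \<and>
              (\<forall>b. recognizable \<Sigma> rk {t \<in> trees \<Sigma> rk. r t = b})"
  shows "(i \<longleftrightarrow> ii) \<and> (ii \<longleftrightarrow> iii) \<and> (iii \<longleftrightarrow> iv) \<and> (iv \<longleftrightarrow> v)"
proof -
  note sb = assms(3)
  obtain f0 where "f0 \<in> \<Sigma>" and "rk f0 = 0"
    using assms(2) by blast
  then have "Node f0 [] \<in> trees \<Sigma> rk"
    by (auto intro: trees.intros)
  then have trees_ne: "trees \<Sigma> rk \<noteq> {}"
    by blast
  have "i \<longleftrightarrow> ii"
    unfolding i_def ii_def by (rule crisp_wta_iff_finite_algebra[OF sb trees_ne])
  moreover have "ii \<Longrightarrow> v"
    unfolding ii_def v_def by (elim exE conjE) (rule finite_algebra_imp_recognizable_fibres)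
  moreover have "v \<Longrightarrow> iii"
    unfolding v_def iii_def by (elim conjE) (rule recognizable_fibres_imp_step_mapping_nf[OF sb trees_ne])
  moreover have "iii \<Longrightarrow> iv"
    unfolding iii_def iv_def by (rule step_mapping_nf_imp_step_mapping)
  moreover have "iv \<Longrightarrow> ii"
    unfolding iv_def ii_def by (rule step_mapping_imp_finite_algebra[OF sb])
  ultimately show ?thesis
    by blast
qed

end
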